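(* Let $d \geq 1$, $\alpha < 1/d$ and $\delta > 0$. Then with overwhelming probability a random graph \[ H \sim H\big(n-2d,\ n^{-d\alpha}(1-n^{-\alpha})^d,\ n^{-d\alpha}(1-n^{-\alpha})^d,\ 0,\ 0,\ 1-n^{-\alpha}\big) \] has spectral gap of its normalized Laplacian larger than $1-\delta$.
   Context: For $N\in\mathbb N$ and probabilities $p_A,p_B,p_{eA},p_{eB},p_{eAB}$, $H(N,p_A,p_B,p_{eA},p_{eB},p_{eAB})$ is the random graph obtained by putting each element of $[N]$ independently into $A$ with probability $p_A$, into $B$ with probability $p_B$, or discarding it otherwise; the vertex set is $A\cup B$, and pairs inside $A$, inside $B$, and between $A$ and $B$ are edges independently with probabilities $p_{eA}$, $p_{eB}$, $p_{eAB}$ respectively. (Here $H$ is thus a random bipartite graph between $A$ and $B$.) For a graph without isolated vertices with adjacency matrix $A$ and degree matrix $D$, the normalized Laplacian is $I - D^{-1/2}AD^{-1/2}$ and its spectral gap is its second smallest eigenvalue $\lambda_2$. Here $\alpha>0$. "With overwhelming probability" means with probability at least $1-n^{-\omega(1)}$ as $n\to\infty$. *)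

theory Defs
  imports "HOL-Probability.Probability" "Jordan_Normal_Form.Char_Poly"
begin

text \<open>A finite simple graph is a pair (V, E) with V a finite set of natural numbers
  and E a symmetric irreflexive set of ordered pairs of vertices.\<close>

definition deg :: "nat set \<Rightarrow> (nat \<times> nat) set \<Rightarrow> nat \<Rightarrow> nat" where
  "deg V E v = card {u \<in> V. (v, u) \<in> E}"

definition adj_mat :: "nat set \<Rightarrow> (nat \<times> nat) set \<Rightarrow> real mat" where
  "adj_mat V E = (let vs = sorted_list_of_set V; n = length vs in
     mat n n (\<lambda>(i, j). if (vs ! i, vs ! j) \<in> E then 1 else 0))"

definition deg_inv_sqrt_mat :: "nat set \<Rightarrow> (nat \<times> nat) set \<Rightarrow> real mat" where
  "deg_inv_sqrt_mat V E = (let vs = sorted_list_of_set V; n = length vs in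
     mat n n (\<lambda>(i, j). if i = j then 1 / sqrt (real (deg V E (vs ! i))) else 0))"

definition norm_laplacian :: "nat set \<Rightarrow> (nat \<times> nat) set \<Rightarrow> real mat" where
  "norm_laplacian V E = 1\<^sub>m (card V) - deg_inv_sqrt_mat V E * adj_mat V E * deg_inv_sqrt_mat V E"

text \<open>Multiset of (real) eigenvalues, counted with algebraic multiplicity
  (for a real symmetric matrix the characteristic polynomial splits over the reals).\<close>
definition eigvals_mset :: "real mat \<Rightarrow> real multiset" where
  "eigvals_mset M = (\<Sum>x\<in>{x. poly (char_poly M) x = 0}. replicate_mset (order x (char_poly M)) x)"

definition spectral_gap :: "nat set \<Rightarrow> (nat \<times> nat) set \<Rightarrow> real" where
  "spectral_gap V E = sorted_list_of_multiset (eigvals_mset (norm_laplacian V E)) ! 1"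

text \<open>The event "the graph has no isolated vertices (so the normalized Laplacian is defined),
  has at least two vertices (so lambda_2 exists), and lambda_2 > t".\<close>
definition gap_greater :: "real \<Rightarrow> nat set \<times> (nat \<times> nat) set \<Rightarrow> bool" where
  "gap_greater t G = (case G of (V, E) \<Rightarrow>
      card V \<ge> 2 \<and> (\<forall>v\<in>V. deg V E v > 0) \<and> spectral_gap V E > t)"

datatype lab = InA | InB | Out

definition label_pmf :: "real \<Rightarrow> real \<Rightarrow> lab pmf" where
  "label_pmf pA pB = pmf_of_list [(InA, pA), (InB, pB), (Out, 1 - pA - pB)]"

definition edge_prob :: "real \<Rightarrow> real \<Rightarrow> real \<Rightarrow> lab \<Rightarrow> lab \<Rightarrow> real" where
  "edge_prob peA peB peAB l1 l2 =
     (if l1 = Out \<or> l2 = Out then 0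
      else if l1 = InA \<and> l2 = InA then peA
      else if l1 = InB \<and> l2 = InB then peB
      else peAB)"

definition random_H :: "nat \<Rightarrow> real \<Rightarrow> real \<Rightarrow> real \<Rightarrow> real \<Rightarrow> real \<Rightarrow>
    (nat set \<times> (nat \<times> nat) set) pmf" where
  "random_H N pA pB peA peB peAB =
     do {
       lab \<leftarrow> Pi_pmf {..<N} Out (\<lambda>_. label_pmf pA pB);
       e \<leftarrow> Pi_pmf {(i, j). i < j \<and> j < N} False
              (\<lambda>(i, j). bernoulli_pmf (edge_prob peA peB peAB (lab i) (lab j)));
       return_pmf ({i. i < N \<and> lab i \<noteq> Out},
                   {(i, j). i < N \<and> j < N \<and> i \<noteq> j \<and> lab i \<noteq> Out \<and> lab j \<noteq> Out
                            \<and> e (min i j, max i j)})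
     }"

end

theory Submission
  imports Defs "Jordan_Normal_Form.Schur_Decomposition" "HOL-Real_Asymp.Real_Asymp"
begin

(* The normalized Laplacian L of a bipartite graph has the eigenvalues 0 and 2, and the squared
   distances of all its eigenvalues from 1 add up to the squared Frobenius norm of L - I, which is
   the sum of 1 / (deg u * deg v) over the ordered edges (u, v). If every vertex is adjacent to
   all but an eta-fraction of the other side, this sum is at most 2 / (1 - eta) < 2 + delta^2,
   so every other eigenvalue lies within delta of 1 and lambda_2 > 1 - delta.

   In H each side has about n^(1 - d alpha) = t^2 vertices in expectation; it has fewer than
   t vertices only with probability exp(-Omega(t^2)). Given at least t vertices on each side,
   a vertex misses an eta-fraction of the other side with probability at most 2^(-t), since edges
   are absent with probability n^(-alpha). Both failure probabilities are n^(-omega(1)). *)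

section \<open>Real symmetric matrices\<close>

lemma symmetric_mat_eigenvalue_real:
  fixes M :: "real mat"
  assumes M: "M \<in> carrier_mat n n" and sym: "\<And>i j. i < n \<Longrightarrow> j < n \<Longrightarrow> M $$ (i,j) = M $$ (j,i)"
    and ev: "eigenvalue (map_mat complex_of_real M) a"
  shows "a \<in> \<real>"
proof -
  let ?Mc = "map_mat complex_of_real M"
  from ev obtain v where v: "v \<in> carrier_vec n" "v \<noteq> 0\<^sub>v n" "?Mc *\<^sub>v v = a \<cdot>\<^sub>v v"
    unfolding eigenvalue_def eigenvector_def using M by auto
  \<comment> \<open>\<open>a\<close> is the Rayleigh quotient \<open>s / w\<close>, whose numerator and denominator are real\<close>
  define s where "s = (\<Sum>i<n. \<Sum>j<n. cnj (v $ i) * complex_of_real (M $$ (i,j)) * v $ j)"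
  define w where "w = (\<Sum>i<n. v $ i * cnj (v $ i))"
  have "s = (\<Sum>i<n. cnj (v $ i) * (?Mc *\<^sub>v v) $ i)"
    using M v(1) by (auto simp: s_def mult_mat_vec_def scalar_prod_def lessThan_atLeast0
        sum_distrib_left mult.assoc intro!: sum.cong)
  also have "\<dots> = a * w"
    using v(1,3) by (auto simp: w_def sum_distrib_left algebra_simps intro!: sum.cong)
  finally have s: "s = a * w" .
  have "cnj s = (\<Sum>i<n. \<Sum>j<n. v $ i * complex_of_real (M $$ (i,j)) * cnj (v $ j))"
    unfolding s_def by (simp add: cnj_sum)
  also have "\<dots> = (\<Sum>j<n. \<Sum>i<n. v $ i * complex_of_real (M $$ (i,j)) * cnj (v $ j))"
    by (rule sum.swap)
  also have "\<dots> = s"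
    unfolding s_def by (auto simp: sym intro!: sum.cong)
  finally have "s \<in> \<real>" by (metis Reals_cnj_iff)
  have w: "w = of_real (\<Sum>i<n. (Re (v $ i))\<^sup>2 + (Im (v $ i))\<^sup>2)"
    by (simp add: w_def of_real_sum complex_mult_cnj)
  obtain i where i: "i < n" "v $ i \<noteq> 0"
    using v(1,2) by (metis carrier_vecD eq_vecI index_zero_vec)
  have "0 < (Re (v $ i))\<^sup>2 + (Im (v $ i))\<^sup>2"
    using i(2) by (simp add: sum_power2_gt_zero_iff complex_eq_iff)
  also have "\<dots> \<le> (\<Sum>i<n. (Re (v $ i))\<^sup>2 + (Im (v $ i))\<^sup>2)"
    by (rule member_le_sum) (use i in auto)
  finally have "w \<noteq> 0" unfolding w by (metis of_real_eq_0_iff less_irrefl)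
  moreover have "w \<in> \<real>" unfolding w by simp
  ultimately show ?thesis using s \<open>s \<in> \<real>\<close> by (metis Reals_divide nonzero_mult_div_cancel_right)
qed

lemma symmetric_mat_char_poly_splits:
  fixes M :: "real mat"
  assumes M: "M \<in> carrier_mat n n" and sym: "\<And>i j. i < n \<Longrightarrow> j < n \<Longrightarrow> M $$ (i,j) = M $$ (j,i)"
  obtains es where "char_poly M = (\<Prod>e\<leftarrow>es. [:- e, 1:])" "length es = n"
proof -
  interpret of_real_poly: map_poly_inj_idom_hom "of_real :: real \<Rightarrow> complex" ..
  let ?Mc = "map_mat complex_of_real M"
  obtain as where as: "char_poly ?Mc = (\<Prod>a\<leftarrow>as. [:- a, 1:])" "length as = n"
    using char_poly_factorized[of ?Mc n] M by auto
  have "a \<in> \<real>" if "a \<in> set as" for a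
  proof (rule symmetric_mat_eigenvalue_real[OF M sym])
    have "poly (char_poly ?Mc) a = 0"
      using that unfolding as(1) by (induction as) auto
    then show "eigenvalue ?Mc a" using eigenvalue_root_char_poly[of ?Mc n] M by simp
  qed
  then have as_real: "map (of_real \<circ> Re) as = as" by (induction as) auto
  have "map_poly of_real (char_poly M) = char_poly ?Mc"
    by (rule of_real_hom.char_poly_hom[OF M, symmetric])
  also have "\<dots> = (\<Prod>a\<leftarrow>map (of_real \<circ> Re) as. [:- a, 1:])"
    unfolding as(1) as_real ..
  also have "\<dots> = map_poly of_real (\<Prod>e\<leftarrow>map Re as. [:- e, 1:])"
    by (simp add: of_real_poly.hom_prod_list o_def of_real_poly.map_poly_pCons_hom)
  finally have "char_poly M = (\<Prod>e\<leftarrow>map Re as. [:- e, 1:])" by simp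
  with as(2) show ?thesis by (intro that[of "map Re as"]) simp_all
qed

definition trace_mat :: "'a::comm_ring_1 mat \<Rightarrow> 'a" where
  "trace_mat A = (\<Sum>i<dim_row A. A $$ (i,i))"

lemma trace_mat_mult_comm:
  assumes A: "A \<in> carrier_mat n m" and B: "B \<in> carrier_mat m n"
  shows "trace_mat (A * B) = trace_mat (B * A)"
proof -
  have "trace_mat (A * B) = (\<Sum>i<n. \<Sum>k<m. A $$ (i,k) * B $$ (k,i))"
    using A B by (auto simp: trace_mat_def scalar_prod_def lessThan_atLeast0 intro!: sum.cong)
  also have "\<dots> = (\<Sum>k<m. \<Sum>i<n. B $$ (k,i) * A $$ (i,k))"
    by (subst sum.swap) (simp add: mult.commute)
  also have "\<dots> = trace_mat (B * A)"
    using A B by (auto simp: trace_mat_def scalar_prod_def lessThan_atLeast0 intro!: sum.cong)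
  finally show ?thesis .
qed

lemma trace_mat_similar:
  assumes "similar_mat_wit A B P Q"
  shows "trace_mat A = trace_mat B"
proof -
  from assms obtain n where n: "A \<in> carrier_mat n n" "B \<in> carrier_mat n n"
    "P \<in> carrier_mat n n" "Q \<in> carrier_mat n n" and QP: "Q * P = 1\<^sub>m n" and A: "A = P * B * Q"
    unfolding similar_mat_wit_def Let_def by auto
  have "trace_mat (P * B * Q) = trace_mat (Q * (P * B))"
    using n by (intro trace_mat_mult_comm) auto
  also have "Q * (P * B) = B"
    using n QP by (simp flip: assoc_mult_mat[of Q n n P n B n])
  finally show ?thesis unfolding A .
qed

lemma trace_mat_square:
  assumes "X \<in> carrier_mat n n"
  shows "trace_mat (X * X) = (\<Sum>i<n. \<Sum>j<n. X $$ (i,j) * X $$ (j,i))"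
  using assms by (auto simp: trace_mat_def scalar_prod_def lessThan_atLeast0 intro!: sum.cong)

lemma trace_mat_square_upper_triangular:
  assumes B: "B \<in> carrier_mat n n" and ut: "upper_triangular B"
  shows "trace_mat (B * B) = (\<Sum>i<n. (B $$ (i,i))\<^sup>2)"
proof -
  have "(\<Sum>j<n. B $$ (i,j) * B $$ (j,i)) = (B $$ (i,i))\<^sup>2" if "i < n" for i
  proof -
    have "B $$ (i,j) * B $$ (j,i) = 0" if "j \<noteq> i" "j < n" for j
      using ut B that \<open>i < n\<close> by (cases "j < i") (auto simp: upper_triangular_def)
    then have "(\<Sum>j<n. B $$ (i,j) * B $$ (j,i)) = B $$ (i,i) * B $$ (i,i)"
      using \<open>i < n\<close> by (subst sum.remove[of _ i]) auto
    then show ?thesis by (simp add: power2_eq_square)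
  qed
  then show ?thesis by (simp add: trace_mat_square[OF B])
qed

text \<open>Via a Schur decomposition \<open>M = P B Q\<close>: \<open>M - 1\<close> is similar to the triangular \<open>B - 1\<close>.\<close>
lemma sum_sq_eigenvalues_minus_one:
  fixes M :: "'a::conjugatable_ordered_field mat"
  assumes M: "M \<in> carrier_mat n n" and cp: "char_poly M = (\<Prod>e\<leftarrow>es. [:- e, 1:])"
  shows "(\<Sum>e\<leftarrow>es. (e - 1)\<^sup>2) = trace_mat ((M - 1\<^sub>m n) * (M - 1\<^sub>m n))"
proof -
  obtain B P Q where "schur_decomposition M es = (B, P, Q)" by (cases "schur_decomposition M es")
  with schur_decomposition[OF M cp] have wit: "similar_mat_wit M B P Q"
    and ut: "upper_triangular B" and diag: "diag_mat B = es" by auto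
  from wit M have B: "B \<in> carrier_mat n n" and P: "P \<in> carrier_mat n n" and Q: "Q \<in> carrier_mat n n"
    and PQ: "P * Q = 1\<^sub>m n" and QP: "Q * P = 1\<^sub>m n" and M_eq: "P * B * Q = M"
    unfolding similar_mat_wit_def Let_def by auto
  let ?B1 = "B - 1\<^sub>m n"
  have "P * ?B1 * Q = P * B * Q - P * Q"
    using B P Q by (simp add: mult_minus_distrib_mat minus_mult_distrib_mat[of _ n n _ Q n])
  then have "P * ?B1 * Q = M - 1\<^sub>m n" by (simp only: M_eq PQ)
  then have "similar_mat_wit (M - 1\<^sub>m n) ?B1 P Q"
    using M B P Q PQ QP unfolding similar_mat_wit_def Let_def by (simp add: minus_carrier_mat)
  then have "similar_mat_wit ((M - 1\<^sub>m n) * (M - 1\<^sub>m n)) (?B1 * ?B1) P Q"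
    using similar_mat_wit_pow[of _ ?B1 P Q 2] M B by (simp add: numeral_2_eq_2)
  then have "trace_mat ((M - 1\<^sub>m n) * (M - 1\<^sub>m n)) = trace_mat (?B1 * ?B1)"
    by (rule trace_mat_similar)
  also have "\<dots> = (\<Sum>i<n. (B $$ (i,i) - 1)\<^sup>2)"
    using B ut by (subst trace_mat_square_upper_triangular) (auto simp: upper_triangular_def)
  also have "\<dots> = (\<Sum>e\<leftarrow>es. (e - 1)\<^sup>2)"
    using B diag by (auto simp: diag_mat_def sum_list_sum_nth lessThan_atLeast0)
  finally show ?thesis by simp
qed

lemma eigvals_mset_linear_factors:
  fixes M :: "real mat"
  assumes "char_poly M = (\<Prod>e\<leftarrow>es. [:- e, 1:])"
  shows "eigvals_mset M = mset es"
proof -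
  let ?p = "char_poly M"
  have nonzero: "(\<Prod>e\<leftarrow>xs. [:- e, 1:]) \<noteq> 0" for xs :: "real list"
    by (induction xs) (simp_all add: mult_eq_0_iff del: mult_pCons_left)
  have proots: "proots ?p = mset es"
    unfolding assms
  proof (induction es)
    case (Cons a es)
    have "proots ([:- a, 1:] * (\<Prod>e\<leftarrow>es. [:- e, 1:])) = proots [:- a, 1:] + mset es"
      using Cons nonzero[of es] by (subst proots_mult) simp_all
    then show ?case by simp
  qed simp
  have "?p \<noteq> 0" unfolding assms by (rule nonzero)
  show ?thesis
  proof (rule multiset_eqI)
    fix y
    have "count (eigvals_mset M) y = (\<Sum>x\<in>{x. poly ?p x = 0}. if x = y then Polynomial.order y ?p else 0)"
      unfolding eigvals_mset_def count_sum by (intro sum.cong) auto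
    also have "\<dots> = Polynomial.order y ?p"
      using \<open>?p \<noteq> 0\<close> poly_roots_finite[of ?p] by (auto simp: order_root)
    finally show "count (eigvals_mset M) y = count (mset es) y"
      using \<open>?p \<noteq> 0\<close> by (simp flip: proots)
  qed
qed

lemma sorted_list_of_multiset_second_gt:
  fixes A :: "'a::linorder multiset"
  assumes "size A \<ge> 2" and "size (filter_mset (\<lambda>x. x \<le> t) A) \<le> 1"
  shows "sorted_list_of_multiset A ! 1 > t"
proof (rule ccontr)
  assume "\<not> ?thesis"
  obtain a b rest where xs: "sorted_list_of_multiset A = a # b # rest"
    using assms(1) by (metis Suc_le_length_iff mset_sorted_list_of_multiset numeral_2_eq_2 size_mset)
  have "a \<le> b" using sorted_sorted_list_of_multiset[of A] unfolding xs by simp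
  with \<open>\<not> ?thesis\<close> xs have "a \<le> t" "b \<le> t" by auto
  have "A = {#a, b#} + mset rest"
    using mset_sorted_list_of_multiset[of A] unfolding xs by simp
  then have "size (filter_mset (\<lambda>x. x \<le> t) A) \<ge> 2"
    using \<open>a \<le> t\<close> \<open>b \<le> t\<close> by simp
  with assms(2) show False by simp
qed

text \<open>The squared distances of the eigenvalues from 1 add up to the squared Frobenius norm
  of \<open>M - 1\<close>. The eigenvalues 0 and 2 already contribute 2 to this sum, so the remaining
  ones lie within \<open>\<delta>\<close> of 1.\<close>
lemma symmetric_mat_second_eigenvalue_gt:
  fixes M :: "real mat" and \<delta> :: real
  assumes M: "M \<in> carrier_mat n n" and sym: "\<And>i j. i < n \<Longrightarrow> j < n \<Longrightarrow> M $$ (i,j) = M $$ (j,i)"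
    and n: "n \<ge> 2" and root0: "poly (char_poly M) 0 = 0" and root2: "poly (char_poly M) 2 = 0"
    and frobenius: "(\<Sum>i<n. \<Sum>j<n. (M $$ (i,j) - (if i = j then 1 else 0))\<^sup>2) < 2 + \<delta>\<^sup>2"
    and \<delta>: "\<delta> > 0"
  shows "sorted_list_of_multiset (eigvals_mset M) ! 1 > 1 - \<delta>"
proof -
  obtain es where cp: "char_poly M = (\<Prod>e\<leftarrow>es. [:- e, 1:])" and len: "length es = n"
    using symmetric_mat_char_poly_splits[OF M sym] .
  have "0 \<in># mset es" "2 \<in># mset es"
    using root0 root2 unfolding cp poly_prod_list by (auto simp: prod_list_zero_iff)
  then have "2 \<in># mset es - {#0#}" by (simp add: in_diff_count)
  define R where "R = mset es - {#0#} - {#2#}"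
  have es: "mset es = {#0, 2#} + R"
    using insert_DiffM[OF \<open>0 \<in># mset es\<close>] insert_DiffM[OF \<open>2 \<in># mset es - {#0#}\<close>]
    unfolding R_def by simp
  have "(\<Sum>e\<leftarrow>es. (e - 1)\<^sup>2) = trace_mat ((M - 1\<^sub>m n) * (M - 1\<^sub>m n))"
    by (rule sum_sq_eigenvalues_minus_one[OF M cp])
  also have "\<dots> = (\<Sum>i<n. \<Sum>j<n. (M $$ (i,j) - (if i = j then 1 else 0))\<^sup>2)"
    using M by (subst trace_mat_square[of _ n]) (auto simp: power2_eq_square sym intro!: sum.cong)
  also have "(\<Sum>e\<leftarrow>es. (e - 1)\<^sup>2) = (\<Sum>e\<in>#mset es. (e - 1)\<^sup>2)"
    by (simp add: sum_mset_sum_list[symmetric])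
  finally have "(\<Sum>e\<in>#mset es. (e - 1)\<^sup>2) < 2 + \<delta>\<^sup>2"
    using frobenius by simp
  then have R_sum: "(\<Sum>e\<in>#R. (e - 1)\<^sup>2) < \<delta>\<^sup>2" unfolding es by simp
  have R_gt: "x > 1 - \<delta>" if "x \<in># R" for x
  proof -
    obtain R' where "R = add_mset x R'" using \<open>x \<in># R\<close> by (metis multi_member_split)
    moreover have "(\<Sum>e\<in>#R'. (e - 1)\<^sup>2) \<ge> 0" by (induction R') simp_all
    ultimately have "\<bar>x - 1\<bar>\<^sup>2 < \<delta>\<^sup>2" using R_sum by simp
    then have "\<bar>x - 1\<bar> < \<delta>" by (rule power2_less_imp_less) (use \<delta> in simp)
    then show ?thesis by simp
  qed
  then have "filter_mset (\<lambda>x. x \<le> 1 - \<delta>) R = {#}"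
    unfolding filter_mset_eq_mempty_iff by (meson not_le)
  then have "size (filter_mset (\<lambda>x. x \<le> 1 - \<delta>) (mset es)) \<le> 1"
    using \<delta> unfolding es by (simp del: filter_mset_eq_mempty_iff)
  then show ?thesis
    using sorted_list_of_multiset_second_gt[of "mset es" "1 - \<delta>"] len n
    by (simp add: eigvals_mset_linear_factors[OF cp])
qed

section \<open>The normalized Laplacian\<close>

lemma diag_mult_mult_diag_index:
  fixes D A :: "'a::comm_semiring_0 mat"
  assumes D: "D \<in> carrier_mat n n" and A: "A \<in> carrier_mat n n"
    and diag: "\<And>i j. i < n \<Longrightarrow> j < n \<Longrightarrow> i \<noteq> j \<Longrightarrow> D $$ (i,j) = 0"
    and i: "i < n" and j: "j < n"
  shows "(D * A * D) $$ (i,j) = D $$ (i,i) * A $$ (i,j) * D $$ (j,j)"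
proof -
  have DA: "(D * A) $$ (i,k) = D $$ (i,i) * A $$ (i,k)" if "k < n" for k
  proof -
    have "(D * A) $$ (i,k) = (\<Sum>l\<in>{0..<n}. D $$ (i,l) * A $$ (l,k))"
      using D A i that by (simp add: scalar_prod_def)
    also have "\<dots> = (\<Sum>l\<in>{i}. D $$ (i,l) * A $$ (l,k))"
      by (rule sum.mono_neutral_right) (use i diag in auto)
    finally show ?thesis by simp
  qed
  have "(D * A * D) $$ (i,j) = (\<Sum>k\<in>{0..<n}. (D * A) $$ (i,k) * D $$ (k,j))"
    using D A i j by (simp add: scalar_prod_def del: assoc_mult_mat)
  also have "\<dots> = (\<Sum>k\<in>{j}. (D * A) $$ (i,k) * D $$ (k,j))"
    by (rule sum.mono_neutral_right) (use j diag in auto)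
  also have "\<dots> = D $$ (i,i) * A $$ (i,j) * D $$ (j,j)" using DA[OF j] by simp
  finally show ?thesis .
qed

lemma norm_laplacian_carrier: "finite V \<Longrightarrow> norm_laplacian V E \<in> carrier_mat (card V) (card V)"
  unfolding norm_laplacian_def deg_inv_sqrt_mat_def adj_mat_def Let_def
  by (intro minus_carrier_mat mult_carrier_mat) auto

lemma norm_laplacian_index:
  fixes V :: "nat set"
  defines "vs \<equiv> sorted_list_of_set V"
  assumes fin: "finite V" and i: "i < card V" and j: "j < card V"
  shows "norm_laplacian V E $$ (i,j) = (if i = j then 1 else 0) -
    (if (vs ! i, vs ! j) \<in> E then 1 / (sqrt (deg V E (vs ! i)) * sqrt (deg V E (vs ! j))) else 0)"
proof -
  let ?D = "deg_inv_sqrt_mat V E" and ?A = "adj_mat V E"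
  have len: "length vs = card V" unfolding vs_def using fin by simp
  have D: "?D \<in> carrier_mat (card V) (card V)" and A: "?A \<in> carrier_mat (card V) (card V)"
    unfolding deg_inv_sqrt_mat_def adj_mat_def Let_def using len vs_def by auto
  have "(?D * ?A * ?D) $$ (i,j) = ?D $$ (i,i) * ?A $$ (i,j) * ?D $$ (j,j)"
    by (rule diag_mult_mult_diag_index[OF D A _ i j])
      (auto simp: deg_inv_sqrt_mat_def Let_def len[unfolded vs_def])
  then show ?thesis
    using D A i j len
    by (simp add: norm_laplacian_def deg_inv_sqrt_mat_def adj_mat_def vs_def Let_def
        del: assoc_mult_mat)
qed

lemma sum_sorted_list_of_set_nth:
  assumes "finite V"
  shows "(\<Sum>j<card V. f (sorted_list_of_set V ! j)) = (\<Sum>v\<in>V. f v)"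
  using bij_betw_nth[of "sorted_list_of_set V" "{..<card V}" V] assms
  by (intro sum.reindex_bij_betw) auto

lemma deg_eq_sum: "finite V \<Longrightarrow> real (deg V E u) = (\<Sum>w\<in>V. if (u,w) \<in> E then 1 else 0)"
  unfolding deg_def by (simp add: sum.inter_filter[symmetric])

text \<open>A function \<open>c\<close> on the vertices with \<open>\<Sum>\<^bsub>w \<sim> u\<^esub> c w = (1 - k) c u deg u\<close> gives the
  eigenvector \<open>D\<^sup>1\<^sup>/\<^sup>2 c\<close> of the normalized Laplacian for the eigenvalue \<open>k\<close>.\<close>
lemma norm_laplacian_eigenvalue:
  fixes V :: "nat set" and c :: "nat \<Rightarrow> real"
  assumes fin: "finite V" and irrefl: "\<And>v. (v,v) \<notin> E" and deg: "\<And>v. v \<in> V \<Longrightarrow> deg V E v > 0"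
    and nonzero: "v \<in> V" "c v \<noteq> 0"
    and eq: "\<And>u. u \<in> V \<Longrightarrow> (\<Sum>w\<in>V. if (u,w) \<in> E then c w else 0) = (1 - k) * c u * deg V E u"
  shows "eigenvalue (norm_laplacian V E) k"
proof -
  define vs where "vs = sorted_list_of_set V"
  let ?L = "norm_laplacian V E" and ?n = "card V" and ?d = "\<lambda>j. real (deg V E (vs ! j))"
  have L: "?L \<in> carrier_mat ?n ?n" using norm_laplacian_carrier[OF fin] .
  have vs: "set vs = V" "length vs = ?n" "distinct vs" unfolding vs_def using fin by auto
  then have vs_in: "vs ! j \<in> V" if "j < ?n" for j using that nth_mem by metis
  have d: "?d j > 0" if "j < ?n" for j using deg[OF vs_in[OF that]] by simp
  define x where "x = vec ?n (\<lambda>j. c (vs ! j) * sqrt (?d j))"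
  have x: "x \<in> carrier_vec ?n" unfolding x_def by simp
  obtain j where j: "j < ?n" "vs ! j = v" using nonzero(1) vs by (metis in_set_conv_nth)
  then have "x $ j \<noteq> 0" unfolding x_def using nonzero(2) d[OF j(1)] by simp
  then have "x \<noteq> 0\<^sub>v ?n" using j by auto
  moreover have "?L *\<^sub>v x = k \<cdot>\<^sub>v x"
  proof (rule eq_vecI)
    fix i assume "i < dim_vec (k \<cdot>\<^sub>v x)"
    then have i: "i < ?n" using x by simp
    have "(?L *\<^sub>v x) $ i = (\<Sum>j<?n. ?L $$ (i,j) * x $ j)"
      using L i by (simp add: mult_mat_vec_def scalar_prod_def x_def lessThan_atLeast0)
    also have "\<dots> = (\<Sum>j<?n. (if i = j then x $ j else 0) -
        (if (vs ! i, vs ! j) \<in> E then c (vs ! j) / sqrt (?d i) else 0))"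
      using d i irrefl
      by (intro sum.cong refl) (auto simp: norm_laplacian_index[OF fin] vs_def x_def)
    also have "\<dots> = x $ i - (\<Sum>j<?n. if (vs ! i, vs ! j) \<in> E then c (vs ! j) else 0) / sqrt (?d i)"
      using i by (simp add: sum_subtractf sum_divide_distrib if_distrib[of "\<lambda>t. t / _"] cong: if_cong)
    also have "(\<Sum>j<?n. if (vs ! i, vs ! j) \<in> E then c (vs ! j) else 0) = (1 - k) * c (vs ! i) * ?d i"
      using eq[OF vs_in[OF i]] unfolding vs_def by (subst sum_sorted_list_of_set_nth[OF fin])
    also have "(1 - k) * c (vs ! i) * ?d i / sqrt (?d i) = (1 - k) * c (vs ! i) * sqrt (?d i)"
      using d[OF i] by (simp add: real_div_sqrt flip: times_divide_eq_right)
    also have "x $ i - (1 - k) * c (vs ! i) * sqrt (?d i) = (k \<cdot>\<^sub>v x) $ i"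
      using i by (simp add: x_def algebra_simps)
    finally show "(?L *\<^sub>v x) $ i = (k \<cdot>\<^sub>v x) $ i" .
  qed (use L x in simp)
  ultimately show ?thesis unfolding eigenvalue_def eigenvector_def using x L by auto
qed

definition inv_deg_product_sum :: "nat set \<Rightarrow> (nat \<times> nat) set \<Rightarrow> real" where
  "inv_deg_product_sum V E =
     (\<Sum>u\<in>V. \<Sum>v\<in>V. if (u,v) \<in> E then 1 / (real (deg V E u) * real (deg V E v)) else 0)"

lemma norm_laplacian_frobenius:
  fixes V :: "nat set"
  assumes fin: "finite V" and deg: "\<And>v. v \<in> V \<Longrightarrow> deg V E v > 0"
  shows "(\<Sum>i<card V. \<Sum>j<card V. (norm_laplacian V E $$ (i,j) - (if i = j then 1 else 0))\<^sup>2)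
    = inv_deg_product_sum V E"
proof -
  define vs where "vs = sorted_list_of_set V"
  have vs_in: "vs ! j \<in> V" if "j < card V" for j
    using that fin unfolding vs_def by (metis length_sorted_list_of_set nth_mem set_sorted_list_of_set)
  have "(\<Sum>i<card V. \<Sum>j<card V. (norm_laplacian V E $$ (i,j) - (if i = j then 1 else 0))\<^sup>2)
      = (\<Sum>i<card V. \<Sum>j<card V. if (vs ! i, vs ! j) \<in> E
           then 1 / (real (deg V E (vs ! i)) * real (deg V E (vs ! j))) else 0)"
    using deg vs_in
    by (intro sum.cong refl) (auto simp: norm_laplacian_index[OF fin] vs_def power2_eq_square
        real_sqrt_mult[symmetric])
  also have "\<dots> = inv_deg_product_sum V E"
    unfolding vs_def inv_deg_product_sum_def
    by (subst sum_sorted_list_of_set_nth[OF fin], subst sum_sorted_list_of_set_nth[OF fin]) (rule refl)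
  finally show ?thesis .
qed

text \<open>In a bipartite graph the constant function and the \<open>\<plusminus>1\<close> colouring give the
  eigenvalues 0 and 2 of the normalized Laplacian.\<close>
lemma gap_greater_bipartite:
  fixes V A B :: "nat set" and \<delta> :: real
  assumes fin: "finite V" and V: "V = A \<union> B" "A \<inter> B = {}" "A \<noteq> {}" "B \<noteq> {}"
    and sym: "\<And>u v. (u,v) \<in> E \<Longrightarrow> (v,u) \<in> E" and irrefl: "\<And>v. (v,v) \<notin> E"
    and bipartite: "\<And>u v. u \<in> V \<Longrightarrow> v \<in> V \<Longrightarrow> (u,v) \<in> E \<Longrightarrow> u \<in> A \<longleftrightarrow> v \<in> B"
    and deg: "\<And>v. v \<in> V \<Longrightarrow> deg V E v > 0"
    and weights: "inv_deg_product_sum V E < 2 + \<delta>\<^sup>2" and \<delta>: "\<delta> > 0"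
  shows "gap_greater (1 - \<delta>) (V, E)"
proof -
  let ?L = "norm_laplacian V E" and ?n = "card V"
  have L: "?L \<in> carrier_mat ?n ?n" using norm_laplacian_carrier[OF fin] .
  have "finite A" "finite B" using fin V by auto
  then have "card A \<ge> 1" "card B \<ge> 1" using V by (auto simp: Suc_le_eq card_gt_0_iff)
  then have n: "?n \<ge> 2" using V card_Un_disjoint[OF \<open>finite A\<close> \<open>finite B\<close>] by simp
  obtain v where v: "v \<in> V" using V by auto
  have L_sym: "?L $$ (i,j) = ?L $$ (j,i)" if "i < ?n" "j < ?n" for i j
    using that sym by (auto simp: norm_laplacian_index[OF fin] mult.commute)
  have "eigenvalue ?L 0"
    by (rule norm_laplacian_eigenvalue[OF fin irrefl deg v, of "\<lambda>_. 1"])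
      (simp_all add: deg_eq_sum[OF fin])
  moreover have "eigenvalue ?L 2"
  proof (rule norm_laplacian_eigenvalue[OF fin irrefl deg v, of "\<lambda>v. if v \<in> A then 1 else -1"])
    fix u assume u: "u \<in> V"
    have "(\<Sum>w\<in>V. if (u,w) \<in> E then if w \<in> A then 1 else -1 else 0)
        = (\<Sum>w\<in>V. - (if u \<in> A then 1 else -1) * (if (u,w) \<in> E then 1 else 0 :: real))"
      using bipartite u V by (intro sum.cong refl) auto
    then show "(\<Sum>w\<in>V. if (u,w) \<in> E then if w \<in> A then 1 else -1 else 0)
        = (1 - 2) * (if u \<in> A then 1 else -1) * real (deg V E u)"
      by (simp add: deg_eq_sum[OF fin] sum_distrib_left[symmetric] sum_negf)
  qed auto
  ultimately have "poly (char_poly ?L) 0 = 0" "poly (char_poly ?L) 2 = 0"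
    using eigenvalue_root_char_poly[OF L] by auto
  then have "sorted_list_of_multiset (eigvals_mset ?L) ! 1 > 1 - \<delta>"
    using symmetric_mat_second_eigenvalue_gt[OF L L_sym n] weights \<delta>
    by (simp add: norm_laplacian_frobenius[OF fin deg])
  then show ?thesis unfolding gap_greater_def spectral_gap_def using n deg by simp
qed

section \<open>Nearly complete bipartite graphs\<close>

lemma inv_deg_product_sum_side_le:
  fixes V X Y :: "nat set" and c :: real
  assumes fin: "finite V" and X: "X \<subseteq> V"
    and nbrs: "\<And>u v. u \<in> X \<Longrightarrow> v \<in> V \<Longrightarrow> (u,v) \<in> E \<Longrightarrow> v \<in> Y"
    and deg_X: "\<And>u. u \<in> X \<Longrightarrow> deg V E u > 0"
    and deg_Y: "\<And>v. v \<in> Y \<Longrightarrow> real (deg V E v) \<ge> c * card X" and c: "c > 0"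
  shows "(\<Sum>u\<in>X. \<Sum>v\<in>V. if (u,v) \<in> E then 1 / (real (deg V E u) * real (deg V E v)) else 0) \<le> 1 / c"
proof (cases "X = {}")
  case False
  have X_pos: "c * card X > 0" using False X fin c by (simp add: card_gt_0_iff finite_subset)
  have row: "(\<Sum>v\<in>V. if (u,v) \<in> E then 1 / (real (deg V E u) * real (deg V E v)) else 0)
      \<le> 1 / (c * card X)" if u: "u \<in> X" for u
  proof -
    have du: "real (deg V E u) > 0" using deg_X u by simp
    have "1 / (real (deg V E u) * real (deg V E v)) \<le> 1 / (real (deg V E u) * (c * card X))"
      if "v \<in> V" "(u,v) \<in> E" for v
    proof (rule divide_left_mono)
      have "c * card X \<le> real (deg V E v)" using deg_Y[OF nbrs[OF u that]] .
      then show "real (deg V E u) * (c * card X) \<le> real (deg V E u) * real (deg V E v)"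
        using du by (intro mult_left_mono) auto
      show "0 < real (deg V E u) * real (deg V E v) * (real (deg V E u) * (c * card X))"
        using du X_pos \<open>c * card X \<le> real (deg V E v)\<close> by simp
    qed simp
    then have "(\<Sum>v\<in>V. if (u,v) \<in> E then 1 / (real (deg V E u) * real (deg V E v)) else 0)
        \<le> (\<Sum>v\<in>V. if (u,v) \<in> E then 1 / (real (deg V E u) * (c * card X)) else 0)"
      by (intro sum_mono) auto
    also have "\<dots> = 1 / (real (deg V E u) * (c * card X)) * real (deg V E u)"
      by (simp add: deg_eq_sum[OF fin] sum_distrib_left if_distrib cong: if_cong)
    also have "\<dots> = 1 / (c * card X)" using du by simp
    finally show ?thesis .
  qed
  have "(\<Sum>u\<in>X. \<Sum>v\<in>V. if (u,v) \<in> E then 1 / (real (deg V E u) * real (deg V E v)) else 0)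
      \<le> (\<Sum>u\<in>X. 1 / (c * card X))" by (rule sum_mono) (rule row)
  also have "\<dots> = 1 / c" using X_pos by (cases "card X = 0") auto
  finally show ?thesis .
qed (use c in simp)

lemma inv_deg_product_sum_bipartite_le:
  fixes V A B :: "nat set" and c :: real
  assumes fin: "finite V" and V: "V = A \<union> B" "A \<inter> B = {}" "A \<noteq> {}" "B \<noteq> {}"
    and nbrs_A: "\<And>u v. u \<in> A \<Longrightarrow> v \<in> V \<Longrightarrow> (u,v) \<in> E \<Longrightarrow> v \<in> B"
    and nbrs_B: "\<And>u v. u \<in> B \<Longrightarrow> v \<in> V \<Longrightarrow> (u,v) \<in> E \<Longrightarrow> v \<in> A"
    and deg_A: "\<And>u. u \<in> A \<Longrightarrow> real (deg V E u) \<ge> c * card B"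
    and deg_B: "\<And>v. v \<in> B \<Longrightarrow> real (deg V E v) \<ge> c * card A" and c: "c > 0"
  shows "inv_deg_product_sum V E \<le> 2 / c"
proof -
  have "finite A" "finite B" using fin V by auto
  then have "c * card A > 0" "c * card B > 0" using V c by (auto simp: card_gt_0_iff)
  then have deg_pos: "deg V E u > 0" if "u \<in> V" for u
    using that deg_A deg_B V by (metis UnE of_nat_0_less_iff order_less_le_trans)
  have "inv_deg_product_sum V E
     = (\<Sum>u\<in>A. \<Sum>v\<in>V. if (u,v) \<in> E then 1 / (real (deg V E u) * real (deg V E v)) else 0)
     + (\<Sum>u\<in>B. \<Sum>v\<in>V. if (u,v) \<in> E then 1 / (real (deg V E u) * real (deg V E v)) else 0)"
    unfolding inv_deg_product_sum_def V(1)
    by (rule sum.union_disjoint) (use \<open>finite A\<close> \<open>finite B\<close> V in auto)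
  also have "\<dots> \<le> 1 / c + 1 / c"
    using V deg_pos
    by (intro add_mono inv_deg_product_sum_side_le[OF fin _ nbrs_A _ deg_B c]
        inv_deg_product_sum_side_le[OF fin _ nbrs_B _ deg_A c]) auto
  finally show ?thesis by simp
qed

definition graph_of_labels :: "nat \<Rightarrow> (nat \<Rightarrow> lab) \<Rightarrow> (nat \<times> nat \<Rightarrow> bool) \<Rightarrow>
    nat set \<times> (nat \<times> nat) set" where
  "graph_of_labels N lab e = ({i. i < N \<and> lab i \<noteq> Out},
     {(i, j). i < N \<and> j < N \<and> i \<noteq> j \<and> lab i \<noteq> Out \<and> lab j \<noteq> Out \<and> e (min i j, max i j)})"

definition non_nbrs :: "(nat \<times> nat \<Rightarrow> bool) \<Rightarrow> nat \<Rightarrow> nat set \<Rightarrow> nat set" where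
  "non_nbrs e u Y = {v \<in> Y. \<not> e (min u v, max u v)}"

lemma deg_graph_of_labels_ge:
  fixes N :: nat and lab :: "nat \<Rightarrow> lab" and l l' :: lab and \<eta> :: real
  defines "Y \<equiv> {v. v < N \<and> lab v = l'}"
  assumes same: "\<And>i j. i < N \<Longrightarrow> j < N \<Longrightarrow> i \<noteq> j \<Longrightarrow> lab i = lab j \<Longrightarrow> \<not> e (min i j, max i j)"
    and u: "u < N" "lab u = l" and l: "{l, l'} = {InA, InB}"
    and missing: "real (card (non_nbrs e u Y)) \<le> \<eta> * card Y"
  shows "real (deg (fst (graph_of_labels N lab e)) (snd (graph_of_labels N lab e)) u)
    \<ge> (1 - \<eta>) * card Y"
proof -
  have "l \<noteq> l'" "l \<noteq> Out" "l' \<noteq> Out" using l by (auto simp: doubleton_eq_iff)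
  have "{w \<in> fst (graph_of_labels N lab e). (u, w) \<in> snd (graph_of_labels N lab e)}
      = Y - non_nbrs e u Y"
  proof (intro equalityI subsetI)
    fix w assume "w \<in> {w \<in> fst (graph_of_labels N lab e). (u, w) \<in> snd (graph_of_labels N lab e)}"
    then have w: "w < N" "lab w \<noteq> Out" "u \<noteq> w" "e (min u w, max u w)"
      by (auto simp: graph_of_labels_def)
    then have "lab w \<noteq> l" using same[of u w] u by auto
    then have "lab w = l'" using w(2) l by (cases "lab w") (auto simp: doubleton_eq_iff)
    then show "w \<in> Y - non_nbrs e u Y" using w by (simp add: Y_def non_nbrs_def)
  qed (use u \<open>l \<noteq> l'\<close> \<open>l \<noteq> Out\<close> \<open>l' \<noteq> Out\<close> in \<open>auto simp: graph_of_labels_def Y_def non_nbrs_def\<close>)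
  moreover have "non_nbrs e u Y \<subseteq> Y" "finite Y" "finite (non_nbrs e u Y)"
    by (auto simp: non_nbrs_def Y_def)
  ultimately have "real (deg (fst (graph_of_labels N lab e)) (snd (graph_of_labels N lab e)) u)
      = real (card Y) - real (card (non_nbrs e u Y))"
    unfolding deg_def by (simp add: card_Diff_subset card_mono of_nat_diff)
  with missing show ?thesis by (simp add: left_diff_distrib)
qed

lemma gap_greater_graph_of_labels:
  fixes N :: nat and lab :: "nat \<Rightarrow> lab" and \<eta> \<delta> :: real
  defines "A \<equiv> {i. i < N \<and> lab i = InA}" and "B \<equiv> {i. i < N \<and> lab i = InB}"
  assumes nonempty: "A \<noteq> {}" "B \<noteq> {}"
    and same: "\<And>i j. i < N \<Longrightarrow> j < N \<Longrightarrow> i \<noteq> j \<Longrightarrow> lab i = lab j \<Longrightarrow> \<not> e (min i j, max i j)"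
    and miss_A: "\<And>u. u \<in> A \<Longrightarrow> real (card (non_nbrs e u B)) \<le> \<eta> * card B"
    and miss_B: "\<And>u. u \<in> B \<Longrightarrow> real (card (non_nbrs e u A)) \<le> \<eta> * card A"
    and \<eta>: "\<eta> < 1" and weights: "2 / (1 - \<eta>) < 2 + \<delta>\<^sup>2" and \<delta>: "\<delta> > 0"
  shows "gap_greater (1 - \<delta>) (graph_of_labels N lab e)"
proof -
  define V where "V = fst (graph_of_labels N lab e)"
  define E where "E = snd (graph_of_labels N lab e)"
  have V: "V = A \<union> B" "A \<inter> B = {}" "finite V"
    unfolding V_def graph_of_labels_def A_def B_def by (auto intro: lab.exhaust)
  have E: "(u,v) \<in> E \<longleftrightarrow> u < N \<and> v < N \<and> u \<noteq> v \<and> lab u \<noteq> Out \<and> lab v \<noteq> Out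
      \<and> e (min u v, max u v)" for u v
    unfolding E_def graph_of_labels_def by auto
  have bipartite: "u \<in> A \<longleftrightarrow> v \<in> B" if "u \<in> V" "v \<in> V" "(u,v) \<in> E" for u v
    using that same[of u v] V unfolding E A_def B_def by auto
  have deg_A: "real (deg V E u) \<ge> (1 - \<eta>) * card B" if "u \<in> A" for u
    unfolding V_def E_def B_def
    by (rule deg_graph_of_labels_ge[of N lab e, OF same])
      (use that miss_A[OF that] in \<open>simp_all add: A_def B_def\<close>)
  have deg_B: "real (deg V E u) \<ge> (1 - \<eta>) * card A" if "u \<in> B" for u
    unfolding V_def E_def A_def
    by (rule deg_graph_of_labels_ge[of N lab e, OF same])
      (use that miss_B[OF that] in \<open>simp_all add: A_def B_def insert_commute\<close>)
  have "card A > 0" "card B > 0" using nonempty by (auto simp: A_def B_def card_gt_0_iff)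
  then have "(1 - \<eta>) * card A > 0" "(1 - \<eta>) * card B > 0" using \<eta> by simp_all
  then have "real (deg V E v) > 0" if "v \<in> V" for v
    using that V(1) deg_A[of v] deg_B[of v] by auto
  then have deg_pos: "deg V E v > 0" if "v \<in> V" for v using that by simp
  have "1 - \<eta> > 0" using \<eta> by simp
  have "inv_deg_product_sum V E \<le> 2 / (1 - \<eta>)"
  proof (rule inv_deg_product_sum_bipartite_le[OF V(3,1,2) nonempty _ _ deg_A deg_B \<open>1 - \<eta> > 0\<close>])
    show "v \<in> B" if "u \<in> A" "v \<in> V" "(u,v) \<in> E" for u v
      using bipartite[of u v] that V by auto
    show "v \<in> A" if "u \<in> B" "v \<in> V" "(u,v) \<in> E" for u v
      using bipartite[of u v] that V by auto
  qed
  with weights have weight_bound: "inv_deg_product_sum V E < 2 + \<delta>\<^sup>2" by linarith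
  have "gap_greater (1 - \<delta>) (V, E)"
    by (rule gap_greater_bipartite[OF V(3,1,2) nonempty _ _ bipartite deg_pos weight_bound \<delta>])
      (auto simp: E min.commute max.commute)
  then show ?thesis unfolding V_def E_def by simp
qed

section \<open>Failure probabilities in the random model\<close>

lemma measure_Pi_pmf_all:
  assumes fin: "finite I" and T: "T \<subseteq> I"
  shows "measure_pmf.prob (Pi_pmf I d p) {f. \<forall>t\<in>T. f t \<in> X t} = (\<Prod>t\<in>T. measure_pmf.prob (p t) (X t))"
proof -
  have "{f. \<forall>t\<in>T. f t \<in> X t} = Pi I (\<lambda>t. if t \<in> T then X t else UNIV)"
    using T by (auto simp: Pi_def)
  then have "measure_pmf.prob (Pi_pmf I d p) {f. \<forall>t\<in>T. f t \<in> X t}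
      = (\<Prod>t\<in>I. measure_pmf.prob (p t) (if t \<in> T then X t else UNIV))"
    using measure_Pi_pmf_Pi[OF fin] by simp
  also have "\<dots> = (\<Prod>t\<in>I. if t \<in> T then measure_pmf.prob (p t) (X t) else 1)"
    by (intro prod.cong refl) auto
  also have "\<dots> = (\<Prod>t\<in>T. measure_pmf.prob (p t) (X t))"
    using T fin by (simp add: prod.If_cases Int_absorb1)
  finally show ?thesis .
qed

text \<open>Union bound over the \<open>m\<close>-subsets of \<open>T\<close>.\<close>
lemma measure_Pi_pmf_card_ge_le:
  fixes r :: real
  assumes fin: "finite I" and T: "T \<subseteq> I" and r: "\<And>t. t \<in> T \<Longrightarrow> measure_pmf.prob (p t) (X t) \<le> r"
  shows "measure_pmf.prob (Pi_pmf I d p) {f. m \<le> card {t\<in>T. f t \<in> X t}} \<le> real (card T choose m) * r ^ m"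
proof -
  let ?P = "Pi_pmf I d p"
  define Ss where "Ss = {S. S \<subseteq> T \<and> card S = m}"
  have "finite T" using fin T finite_subset by auto
  then have "finite Ss" unfolding Ss_def by simp
  have "{f. m \<le> card {t\<in>T. f t \<in> X t}} \<subseteq> (\<Union>S\<in>Ss. {f. \<forall>t\<in>S. f t \<in> X t})"
  proof
    fix f assume "f \<in> {f. m \<le> card {t\<in>T. f t \<in> X t}}"
    then obtain S where "S \<subseteq> {t\<in>T. f t \<in> X t}" "card S = m"
      by (auto intro: obtain_subset_with_card_n)
    then show "f \<in> (\<Union>S\<in>Ss. {f. \<forall>t\<in>S. f t \<in> X t})" unfolding Ss_def by auto
  qed
  then have "measure_pmf.prob ?P {f. m \<le> card {t\<in>T. f t \<in> X t}}
      \<le> measure_pmf.prob ?P (\<Union>S\<in>Ss. {f. \<forall>t\<in>S. f t \<in> X t})"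
    by (rule measure_pmf.finite_measure_mono) simp
  also have "\<dots> \<le> (\<Sum>S\<in>Ss. measure_pmf.prob ?P {f. \<forall>t\<in>S. f t \<in> X t})"
    by (rule measure_pmf.finite_measure_subadditive_finite[OF \<open>finite Ss\<close>]) simp
  also have "\<dots> \<le> (\<Sum>S\<in>Ss. r ^ m)"
  proof (rule sum_mono)
    fix S assume "S \<in> Ss"
    then have S: "S \<subseteq> T" "card S = m" unfolding Ss_def by auto
    have "measure_pmf.prob ?P {f. \<forall>t\<in>S. f t \<in> X t} = (\<Prod>t\<in>S. measure_pmf.prob (p t) (X t))"
      using S T by (intro measure_Pi_pmf_all[OF fin]) auto
    also have "\<dots> \<le> (\<Prod>t\<in>S. r)" using r S by (intro prod_mono) auto
    finally show "measure_pmf.prob ?P {f. \<forall>t\<in>S. f t \<in> X t} \<le> r ^ m" using S by simp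
  qed
  also have "\<dots> = real (card T choose m) * r ^ m"
    using n_subsets[OF \<open>finite T\<close>] by (simp add: Ss_def)
  finally show ?thesis .
qed

lemma measure_bind_pmf_le:
  assumes c: "c \<ge> 0" and bound: "\<And>x. x \<in> set_pmf p \<Longrightarrow> x \<notin> L \<Longrightarrow> measure_pmf.prob (f x) S \<le> c"
  shows "measure_pmf.prob (bind_pmf p f) S \<le> measure_pmf.prob p L + c"
proof -
  have "emeasure (measure_pmf (f x)) S \<le> indicator L x + ennreal c" if "x \<in> set_pmf p" for x
  proof (cases "x \<in> L")
    case False
    then show ?thesis
      using bound[OF that False] by (simp add: measure_pmf.emeasure_eq_measure ennreal_leI)
  qed (simp add: measure_pmf.emeasure_le_1 add_increasing2)
  then have "emeasure (measure_pmf (bind_pmf p f)) S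
      \<le> (\<integral>\<^sup>+x. (indicator L x + ennreal c) \<partial>measure_pmf p)"
    by (simp add: AE_pmfI nn_integral_mono_AE)
  also have "\<dots> = ennreal (measure_pmf.prob p L + c)"
    using c by (simp add: nn_integral_add measure_pmf.emeasure_eq_measure ennreal_plus)
  finally show ?thesis
    using c by (simp add: measure_pmf.emeasure_eq_measure ennreal_le_iff del: ennreal_plus)
qed

definition labels_pmf :: "nat \<Rightarrow> real \<Rightarrow> (nat \<Rightarrow> lab) pmf" where
  "labels_pmf N p = Pi_pmf {..<N} Out (\<lambda>_. label_pmf p p)"

text \<open>\<open>q\<close> is the probability that an edge between the two sides is missing.\<close>
definition edges_pmf :: "nat \<Rightarrow> (nat \<Rightarrow> lab) \<Rightarrow> real \<Rightarrow> (nat \<times> nat \<Rightarrow> bool) pmf" where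
  "edges_pmf N lab q = Pi_pmf {(i, j). i < j \<and> j < N} False
     (\<lambda>(i, j). bernoulli_pmf (edge_prob 0 0 (1 - q) (lab i) (lab j)))"

lemma random_H_eq_bind:
  "random_H N p p 0 0 (1 - q) =
     bind_pmf (labels_pmf N p) (\<lambda>lab. map_pmf (graph_of_labels N lab) (edges_pmf N lab q))"
  unfolding random_H_def labels_pmf_def edges_pmf_def map_pmf_def graph_of_labels_def by simp

lemma finite_pairs: "finite {(i, j). i < j \<and> j < (N::nat)}"
  by (rule finite_subset[of _ "{..<N} \<times> {..<N}"]) auto

lemma edges_pmf_same_label:
  assumes "e \<in> set_pmf (edges_pmf N lab q)" and "i < N" "j < N" "i \<noteq> j" "lab i = lab j"
  shows "\<not> e (min i j, max i j)"
proof -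
  have "(min i j, max i j) \<in> {(i, j). i < j \<and> j < N}" using assms(2-4) by (auto simp: min_def max_def)
  then have "e (min i j, max i j) \<in> set_pmf (bernoulli_pmf
      (edge_prob 0 0 (1 - q) (lab (min i j)) (lab (max i j))))"
    using assms(1) by (auto simp: edges_pmf_def set_Pi_pmf[OF finite_pairs] PiE_dflt_def)
  moreover have "lab (min i j) = lab (max i j)" using assms(5) by (simp add: min_def max_def)
  then have "edge_prob 0 0 (1 - q) (lab (min i j)) (lab (max i j)) = 0"
    by (cases "lab (min i j)") (auto simp: edge_prob_def)
  ultimately show ?thesis by (cases "e (min i j, max i j)") (simp_all add: set_pmf_iff)
qed

lemma measure_label_pmf_other:
  assumes "0 \<le> p" "2 * p \<le> 1" and "l = InA \<or> l = InB"
  shows "measure_pmf.prob (label_pmf p p) {x. x \<noteq> l} = 1 - p"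
proof -
  have "pmf_of_list_wf [(InA, p), (InB, p), (Out, 1 - p - p)]"
    by (rule pmf_of_list_wfI) (use assms in auto)
  from measure_pmf_of_list[OF this] show ?thesis
    using assms(3) unfolding label_pmf_def by auto
qed

text \<open>Fewer than \<open>k\<close> vertices on one side means at least \<open>N - k + 1\<close> vertices elsewhere.\<close>
lemma few_labels_prob_le:
  assumes p: "0 \<le> p" "2 * p \<le> 1" and k: "1 \<le> k" "k \<le> N" and l: "l = InA \<or> l = InB"
  shows "measure_pmf.prob (labels_pmf N p) {lab. card {i. i < N \<and> lab i = l} < k}
    \<le> real N ^ k * (1 - p) ^ (N - k)"
proof -
  have "card {t\<in>{..<N}. lab t \<in> {x. x \<noteq> l}} = N - card {i. i < N \<and> lab i = l}"
    for lab :: "nat \<Rightarrow> lab"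
  proof -
    have "{t\<in>{..<N}. lab t \<in> {x. x \<noteq> l}} = {..<N} - {i. i < N \<and> lab i = l}" by auto
    then show ?thesis by (simp add: card_Diff_subset subset_eq)
  qed
  then have "{lab. card {i. i < N \<and> lab i = l} < k}
      \<subseteq> {lab. N - k + 1 \<le> card {t\<in>{..<N}. lab t \<in> {x. x \<noteq> l}}}"
    using k by (auto simp: le_diff_conv)
  then have "measure_pmf.prob (labels_pmf N p) {lab. card {i. i < N \<and> lab i = l} < k}
      \<le> measure_pmf.prob (labels_pmf N p) {lab. N - k + 1 \<le> card {t\<in>{..<N}. lab t \<in> {x. x \<noteq> l}}}"
    by (rule measure_pmf.finite_measure_mono) simp
  also have "\<dots> \<le> real (card {..<N} choose (N - k + 1)) * (1 - p) ^ (N - k + 1)"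
    unfolding labels_pmf_def
    by (rule measure_Pi_pmf_card_ge_le) (use measure_label_pmf_other[OF p l] in auto)
  also have "\<dots> \<le> real N ^ k * (1 - p) ^ (N - k)"
  proof (rule mult_mono)
    have "N choose (N - k + 1) = N choose (k - 1)"
      using binomial_symmetric[of "N - k + 1" N] k by simp
    also have "\<dots> \<le> N ^ k"
      using binomial_le_pow[of "k - 1" N] power_increasing[of "k - 1" k N] k by linarith
    finally show "real (card {..<N} choose (N - k + 1)) \<le> real N ^ k" by (simp flip: of_nat_power)
    show "(1 - p) ^ (N - k + 1) \<le> (1 - p) ^ (N - k)" using p by (intro power_decreasing) auto
  qed (use p in auto)
  finally show ?thesis .
qed

lemma many_non_nbrs_prob_le:
  fixes N :: nat and lab :: "nat \<Rightarrow> lab" and l l' :: lab and q :: real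
  defines "Y \<equiv> {v. v < N \<and> lab v = l'}"
  assumes u: "u < N" "lab u = l" and l: "{l, l'} = {InA, InB}" and q: "0 \<le> q" "q \<le> 1"
  shows "measure_pmf.prob (edges_pmf N lab q) {e. m \<le> card (non_nbrs e u Y)}
    \<le> real (card Y choose m) * q ^ m"
proof -
  define pair where "pair = (\<lambda>v. (min u v, max u v))"
  have "u \<notin> Y" using u l by (auto simp: Y_def doubleton_eq_iff)
  then have inj: "inj_on pair Y" by (auto simp: inj_on_def pair_def min_def max_def split: if_splits)
  have pairs: "pair ` Y \<subseteq> {(i, j). i < j \<and> j < N}"
    using \<open>u \<notin> Y\<close> u by (auto simp: pair_def Y_def min_def max_def le_less)
  have "card (non_nbrs e u Y) = card {t \<in> pair ` Y. e t \<in> {False}}" for e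
  proof -
    have "{t \<in> pair ` Y. e t \<in> {False}} = pair ` non_nbrs e u Y"
      by (auto simp: pair_def non_nbrs_def)
    then show ?thesis
      using inj by (simp add: card_image inj_on_subset non_nbrs_def)
  qed
  moreover have "measure_pmf.prob (bernoulli_pmf (edge_prob 0 0 (1 - q) (lab i) (lab j))) {False} \<le> q"
    if "(i, j) \<in> pair ` Y" for i j
  proof -
    from that obtain v where "v \<in> Y" "i = min u v" "j = max u v" by (auto simp: pair_def)
    moreover have "v \<noteq> u" using \<open>u \<notin> Y\<close> \<open>v \<in> Y\<close> by auto
    ultimately have "edge_prob 0 0 (1 - q) (lab i) (lab j) = 1 - q"
      using u l by (cases "u < v") (auto simp: Y_def edge_prob_def doubleton_eq_iff)
    then show ?thesis using q by (simp add: measure_pmf_single)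
  qed
  ultimately show ?thesis
    using measure_Pi_pmf_card_ge_le[OF finite_pairs pairs, of _ "\<lambda>_. {False}" q False m] inj
    by (simp add: edges_pmf_def card_image case_prod_beta)
qed

lemma power_le_quarter_power:
  fixes q \<eta> :: real and m s :: nat
  assumes q: "0 \<le> q" "q \<le> 1" and \<eta>: "\<eta> > 0" and q_powr: "q powr \<eta> \<le> 1/4"
    and m: "real m \<ge> \<eta> * s" "m \<ge> 1"
  shows "q ^ m \<le> (1/4) ^ s"
proof (cases "q = 0")
  case False
  then have "q > 0" using q by simp
  have "q ^ m = q powr real m" using \<open>q > 0\<close> by (simp add: powr_realpow)
  also have "\<dots> \<le> q powr (\<eta> * s)" by (rule powr_mono'[OF m(1)]) (use q in auto)
  also have "\<dots> = (q powr \<eta>) powr real s" by (simp add: powr_powr)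
  also have "\<dots> \<le> (1/4) powr real s" by (rule powr_mono2) (use q_powr in auto)
  also have "\<dots> = (1/4) ^ s" by (simp add: powr_realpow)
  finally show ?thesis .
qed (use m(2) in \<open>simp add: power_0_left\<close>)

text \<open>Exceeding \<open>\<eta> |Y|\<close> non-neighbours means at least \<open>m = \<lfloor>\<eta> |Y|\<rfloor> + 1\<close> of them, which
  happens with probability at most \<open>(|Y| choose m) q\<^sup>m \<le> 2\<^bsup>|Y|\<^esup> 4\<^bsup>-|Y|\<^esup>\<close>.\<close>
lemma many_non_nbrs_fraction_prob_le:
  fixes N k :: nat and lab :: "nat \<Rightarrow> lab" and l l' :: lab and q \<eta> :: real
  defines "Y \<equiv> {v. v < N \<and> lab v = l'}"
  assumes u: "u < N" "lab u = l" and l: "{l, l'} = {InA, InB}" and k: "k \<le> card Y"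
    and q: "0 \<le> q" "q \<le> 1" and \<eta>: "\<eta> > 0" and q_powr: "q powr \<eta> \<le> 1/4"
  shows "measure_pmf.prob (edges_pmf N lab q) {e. real (card (non_nbrs e u Y)) > \<eta> * card Y}
    \<le> (1/2) ^ k"
proof -
  define m where "m = nat \<lfloor>\<eta> * card Y\<rfloor> + 1"
  have "real m \<ge> \<eta> * card Y" using \<eta> by (simp add: m_def) linarith
  have "{e. real (card (non_nbrs e u Y)) > \<eta> * card Y} \<subseteq> {e. m \<le> card (non_nbrs e u Y)}"
  proof safe
    fix e assume "real (card (non_nbrs e u Y)) > \<eta> * card Y"
    then have "\<lfloor>\<eta> * card Y\<rfloor> < int (card (non_nbrs e u Y))" by (simp add: floor_less_iff)
    moreover have "0 \<le> \<lfloor>\<eta> * card Y\<rfloor>" using \<eta> by simp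
    ultimately show "m \<le> card (non_nbrs e u Y)" unfolding m_def by linarith
  qed
  then have "measure_pmf.prob (edges_pmf N lab q) {e. real (card (non_nbrs e u Y)) > \<eta> * card Y}
      \<le> measure_pmf.prob (edges_pmf N lab q) {e. m \<le> card (non_nbrs e u Y)}"
    by (rule measure_pmf.finite_measure_mono) simp
  also have "\<dots> \<le> real (card Y choose m) * q ^ m"
    unfolding Y_def by (rule many_non_nbrs_prob_le[where lab = lab and l' = l', OF u l q])
  also have "\<dots> \<le> 2 ^ card Y * (1/4) ^ card Y"
  proof (rule mult_mono)
    show "real (card Y choose m) \<le> 2 ^ card Y"
      using binomial_le_pow2[of "card Y" m] by (simp flip: of_nat_power)
    show "q ^ m \<le> (1/4) ^ card Y"
      by (rule power_le_quarter_power[OF q \<eta> q_powr \<open>real m \<ge> \<eta> * card Y\<close>]) (simp add: m_def)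
  qed (use q in auto)
  also have "\<dots> = (1/2) ^ card Y" by (simp flip: power_mult_distrib)
  also have "\<dots> \<le> (1/2) ^ k" using k by (intro power_decreasing) auto
  finally show ?thesis .
qed

text \<open>Given the labels, the gap can only fail if some vertex misses more than an \<open>\<eta>\<close>-fraction
  of the other side; union bound over the vertices.\<close>
lemma not_gap_greater_edges_prob_le:
  fixes N k :: nat and lab :: "nat \<Rightarrow> lab" and q \<eta> \<delta> :: real
  defines "A \<equiv> {i. i < N \<and> lab i = InA}" and "B \<equiv> {i. i < N \<and> lab i = InB}"
  assumes sides: "card A \<ge> k" "card B \<ge> k" "k \<ge> 1"
    and q: "0 \<le> q" "q \<le> 1" and \<eta>: "0 < \<eta>" "\<eta> < 1" and q_powr: "q powr \<eta> \<le> 1/4"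
    and weights: "2 / (1 - \<eta>) < 2 + \<delta>\<^sup>2" and \<delta>: "\<delta> > 0"
  shows "measure_pmf.prob (map_pmf (graph_of_labels N lab) (edges_pmf N lab q))
    {G. \<not> gap_greater (1 - \<delta>) G} \<le> real N * (1/2) ^ k"
proof -
  let ?P = "edges_pmf N lab q"
  define bad where "bad = (\<lambda>u Y. {e. real (card (non_nbrs e u Y)) > \<eta> * card Y})"
  have fin: "finite A" "finite B" unfolding A_def B_def by auto
  have failure: "graph_of_labels N lab -` {G. \<not> gap_greater (1 - \<delta>) G} \<inter> set_pmf ?P
      \<subseteq> (\<Union>u\<in>A. bad u B) \<union> (\<Union>u\<in>B. bad u A)"
  proof (rule subsetI, rule ccontr)
    fix e assume e: "e \<in> graph_of_labels N lab -` {G. \<not> gap_greater (1 - \<delta>) G} \<inter> set_pmf ?P"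
      and good: "e \<notin> (\<Union>u\<in>A. bad u B) \<union> (\<Union>u\<in>B. bad u A)"
    have "A \<noteq> {}" "B \<noteq> {}" using sides by auto
    moreover have "\<not> e (min i j, max i j)" if "i < N" "j < N" "i \<noteq> j" "lab i = lab j" for i j
      by (rule edges_pmf_same_label[of e N lab q]) (use e that in auto)
    moreover have "real (card (non_nbrs e u B)) \<le> \<eta> * card B" if "u \<in> A" for u
      using good that by (auto simp: bad_def not_less)
    moreover have "real (card (non_nbrs e u A)) \<le> \<eta> * card A" if "u \<in> B" for u
      using good that by (auto simp: bad_def not_less)
    ultimately have "gap_greater (1 - \<delta>) (graph_of_labels N lab e)"
      using \<eta>(2) weights \<delta> unfolding A_def B_def by (rule gap_greater_graph_of_labels)
    with e show False by simp
  qed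
  have "measure_pmf.prob (map_pmf (graph_of_labels N lab) ?P) {G. \<not> gap_greater (1 - \<delta>) G}
      = measure_pmf.prob ?P (graph_of_labels N lab -` {G. \<not> gap_greater (1 - \<delta>) G} \<inter> set_pmf ?P)"
    by (simp add: measure_Int_set_pmf)
  also have "\<dots> \<le> measure_pmf.prob ?P ((\<Union>u\<in>A. bad u B) \<union> (\<Union>u\<in>B. bad u A))"
    by (rule measure_pmf.finite_measure_mono[OF failure]) simp
  also have "\<dots> \<le> (\<Sum>u\<in>A. measure_pmf.prob ?P (bad u B)) + (\<Sum>u\<in>B. measure_pmf.prob ?P (bad u A))"
    using fin by (intro measure_Un_le[THEN order_trans] add_mono
        measure_pmf.finite_measure_subadditive_finite) auto
  also have "\<dots> \<le> (\<Sum>u\<in>A. (1/2) ^ k) + (\<Sum>u\<in>B. (1/2) ^ k)"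
  proof (intro add_mono sum_mono)
    fix u assume "u \<in> A"
    show "measure_pmf.prob ?P (bad u B) \<le> (1/2) ^ k"
      unfolding bad_def B_def
      by (intro many_non_nbrs_fraction_prob_le)
        (use \<open>u \<in> A\<close> sides q \<eta> q_powr in \<open>auto simp: A_def B_def\<close>)
  next
    fix u assume "u \<in> B"
    show "measure_pmf.prob ?P (bad u A) \<le> (1/2) ^ k"
      unfolding bad_def A_def
      by (intro many_non_nbrs_fraction_prob_le)
        (use \<open>u \<in> B\<close> sides q \<eta> q_powr in \<open>auto simp: A_def B_def insert_commute\<close>)
  qed
  also have "\<dots> = real (card (A \<union> B)) * (1/2) ^ k"
    using fin by (simp add: card_Un_disjoint A_def B_def disjoint_iff algebra_simps)
  also have "\<dots> \<le> real N * (1/2) ^ k"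
    using card_mono[of "{..<N}" "A \<union> B"] by (intro mult_right_mono) (auto simp: A_def B_def)
  finally show ?thesis .
qed

lemma not_gap_greater_prob_le:
  fixes N k :: nat and p q \<eta> \<delta> :: real
  assumes p: "0 \<le> p" "2 * p \<le> 1" and q: "0 \<le> q" "q \<le> 1" and \<eta>: "0 < \<eta>" "\<eta> < 1"
    and q_powr: "q powr \<eta> \<le> 1/4" and k: "1 \<le> k" "k \<le> N"
    and weights: "2 / (1 - \<eta>) < 2 + \<delta>\<^sup>2" and \<delta>: "\<delta> > 0"
  shows "measure_pmf.prob (random_H N p p 0 0 (1 - q)) {G. \<not> gap_greater (1 - \<delta>) G}
    \<le> 2 * (real N ^ k * (1 - p) ^ (N - k)) + real N * (1/2) ^ k"
proof -
  define few where "few = (\<lambda>l. {lab :: nat \<Rightarrow> lab. card {i. i < N \<and> lab i = l} < k})"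
  have "measure_pmf.prob (labels_pmf N p) (few InA \<union> few InB)
      \<le> measure_pmf.prob (labels_pmf N p) (few InA) + measure_pmf.prob (labels_pmf N p) (few InB)"
    by (rule measure_Un_le) auto
  also have "\<dots> \<le> 2 * (real N ^ k * (1 - p) ^ (N - k))"
    using few_labels_prob_le[OF p k, of InA] few_labels_prob_le[OF p k, of InB]
    unfolding few_def by simp
  finally have labels: "measure_pmf.prob (labels_pmf N p) (few InA \<union> few InB)
      \<le> 2 * (real N ^ k * (1 - p) ^ (N - k))" .
  have "measure_pmf.prob (random_H N p p 0 0 (1 - q)) {G. \<not> gap_greater (1 - \<delta>) G}
      \<le> measure_pmf.prob (labels_pmf N p) (few InA \<union> few InB) + real N * (1/2) ^ k"
    unfolding random_H_eq_bind
  proof (rule measure_bind_pmf_le)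
    fix lab assume "lab \<notin> few InA \<union> few InB"
    then show "measure_pmf.prob (map_pmf (graph_of_labels N lab) (edges_pmf N lab q))
        {G. \<not> gap_greater (1 - \<delta>) G} \<le> real N * (1/2) ^ k"
      using q \<eta> q_powr weights \<delta> k
      by (intro not_gap_greater_edges_prob_le) (auto simp: few_def not_less)
  qed simp
  with labels show ?thesis by linarith
qed

section \<open>Asymptotics\<close>

lemma one_minus_power_le_exp:
  fixes p :: real
  assumes "0 \<le> p" "p \<le> 1"
  shows "(1 - p) ^ m \<le> exp (- p * m)"
proof -
  have "(1 - p) ^ m \<le> exp (- p) ^ m"
    using assms exp_ge_add_one_self[of "- p"] by (intro power_mono) auto
  then show ?thesis by (simp add: exp_of_nat_mult[symmetric] mult.commute)
qed

lemma few_labels_term_le: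
  fixes n N k d :: nat and a p t :: real
  assumes n: "n \<ge> 1" and t: "t > 0" and a: "0 \<le> a" "a \<le> 1" "a * n = t\<^sup>2"
    and p: "a / 2 \<le> p" "p \<le> 1" and k: "k \<le> t + 1"
    and N: "real N = real n - 2 * d" "t + 1 \<le> real n - 2 * d"
  shows "real N ^ k * (1 - p) ^ (N - k) \<le> exp ((t + 1) * ln n - t\<^sup>2 / 2 + (2 * d + t + 1) / 2)"
proof -
  have "real N ^ k \<le> real n ^ k" using N by (intro power_mono) auto
  also have "\<dots> = exp (k * ln n)" using n by (simp add: exp_of_nat_mult)
  also have "\<dots> \<le> exp ((t + 1) * ln n)" using k n by (intro exp_mono mult_right_mono) auto
  finally have N_pow: "real N ^ k \<le> exp ((t + 1) * ln n)" .
  have "real (N - k) \<ge> real n - 2 * d - (t + 1)" using k N by (simp add: of_nat_diff)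
  then have "(a / 2) * (real n - 2 * d - (t + 1)) \<le> p * real (N - k)"
    using p a N by (intro mult_mono) auto
  moreover have "a * (2 * d + t + 1) \<le> 2 * d + t + 1" using a t by (simp add: mult_left_le_one_le)
  ultimately have "- p * real (N - k) \<le> - t\<^sup>2 / 2 + (2 * d + t + 1) / 2"
    using a(3) by (simp add: algebra_simps)
  have "0 \<le> p" using p a by linarith
  then have "(1 - p) ^ (N - k) \<le> exp (- p * real (N - k))"
    by (rule one_minus_power_le_exp) (use p in simp)
  also have "\<dots> \<le> exp (- t\<^sup>2 / 2 + (2 * d + t + 1) / 2)"
    using \<open>- p * real (N - k) \<le> _\<close> by simp
  finally have "(1 - p) ^ (N - k) \<le> exp (- t\<^sup>2 / 2 + (2 * d + t + 1) / 2)" .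
  with N_pow have "real N ^ k * (1 - p) ^ (N - k)
      \<le> exp ((t + 1) * ln n) * exp (- t\<^sup>2 / 2 + (2 * d + t + 1) / 2)"
    by (intro mult_mono) (use \<open>0 \<le> p\<close> p in auto)
  then show ?thesis by (simp add: exp_add[symmetric] algebra_simps)
qed

lemma bad_vertices_term_le:
  fixes n N k :: nat and t :: real
  assumes "n \<ge> 1" "N \<le> n" "t \<le> k"
  shows "real N * (1/2) ^ k \<le> exp (ln n - t * ln 2)"
proof -
  have "(1/2::real) ^ k = (1/2) powr real k" by (simp add: powr_realpow)
  also have "\<dots> \<le> (1/2) powr t" using assms by (intro powr_mono') auto
  also have "\<dots> = exp (- t * ln 2)" by (simp add: powr_def ln_div)
  finally have "real N * (1/2) ^ k \<le> real n * exp (- t * ln 2)"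
    using assms by (intro mult_mono) auto
  then show ?thesis using assms by (simp add: exp_diff exp_minus field_simps)
qed

text \<open>The sign of \<open>b\<close> does not matter: \<open>t\<^sup>2\<close> and \<open>t\<close> dominate every multiple of \<open>t ln t\<close> and \<open>ln t\<close>.\<close>
lemma exponents_eventually_nonpos:
  fixes b C D :: real
  shows "eventually (\<lambda>t. (t + 1) * (2 / b) * ln t - t\<^sup>2 / 2 + (D + t + 1) / 2 + C * (2 / b) * ln t
      + ln 4 \<le> 0 \<and> (2 / b) * ln t - t * ln 2 + C * (2 / b) * ln t + ln 2 \<le> 0) at_top"
  by (intro eventually_conj) real_asymp+

lemma failure_bound_le_powr:
  fixes n N k d :: nat and a p t \<beta> C :: real
  assumes n: "n \<ge> 1" and t: "t > 0" "ln n = (2 / \<beta>) * ln t"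
    and a: "0 \<le> a" "a \<le> 1" "a * n = t\<^sup>2" and p: "a / 2 \<le> p" "p \<le> 1"
    and k: "t \<le> k" "k \<le> t + 1" and N: "real N = real n - 2 * d" "t + 1 \<le> real n - 2 * d"
    and exponents: "(t + 1) * (2 / \<beta>) * ln t - t\<^sup>2 / 2 + (2 * d + t + 1) / 2 + C * (2 / \<beta>) * ln t
        + ln 4 \<le> 0" "(2 / \<beta>) * ln t - t * ln 2 + C * (2 / \<beta>) * ln t + ln 2 \<le> 0"
  shows "2 * (real N ^ k * (1 - p) ^ (N - k)) + real N * (1/2) ^ k \<le> real n powr (- C)"
proof -
  have "real N ^ k * (1 - p) ^ (N - k) \<le> exp ((t + 1) * ln n - t\<^sup>2 / 2 + (2 * d + t + 1) / 2)"
    using n t a p k N by (intro few_labels_term_le) auto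
  also have "\<dots> \<le> exp (- C * ln n - ln 4)"
    using exponents(1) t(2) by (simp add: algebra_simps)
  finally have "2 * (real N ^ k * (1 - p) ^ (N - k)) \<le> real n powr (- C) / 2"
    using n by (simp add: exp_diff powr_def)
  have "real N * (1/2) ^ k \<le> exp (ln n - t * ln 2)"
    using n k N by (intro bad_vertices_term_le) auto
  also have "\<dots> \<le> exp (- C * ln n - ln 2)"
    using exponents(2) t(2) by (simp add: algebra_simps)
  finally have "real N * (1/2) ^ k \<le> real n powr (- C) / 2"
    using n by (simp add: exp_diff powr_def)
  with \<open>2 * (real N ^ k * (1 - p) ^ (N - k)) \<le> _\<close> show ?thesis by linarith
qed

lemma gap_greater_prob_ge:
  fixes n d :: nat and \<alpha> \<eta> \<delta> C \<beta> q t :: real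
  defines "\<beta> \<equiv> 1 - d * \<alpha>" and "q \<equiv> real n powr (- \<alpha>)" and "t \<equiv> real n powr ((1 - d * \<alpha>) / 2)"
  assumes \<alpha>: "\<alpha> > 0" and \<beta>: "\<beta> > 0" and \<eta>: "0 < \<eta>" "\<eta> < 1" and weights: "2 / (1 - \<eta>) < 2 + \<delta>\<^sup>2" and \<delta>: "\<delta> > 0"
    and n: "n \<ge> 1" and small: "real n powr (- real d * \<alpha>) < 1/2" "(1 - q) ^ d > 1/2" "q powr \<eta> < 1/4"
    and large: "real n powr (1/2) + 1 \<le> real n - 2 * d"
    and exponents: "(t + 1) * (2 / \<beta>) * ln t - t\<^sup>2 / 2 + (2 * d + t + 1) / 2 + C * (2 / \<beta>) * ln t
        + ln 4 \<le> 0" "(2 / \<beta>) * ln t - t * ln 2 + C * (2 / \<beta>) * ln t + ln 2 \<le> 0"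
  shows "measure_pmf.prob (random_H (n - 2 * d) (real n powr (- real d * \<alpha>) * (1 - q) ^ d)
      (real n powr (- real d * \<alpha>) * (1 - q) ^ d) 0 0 (1 - q)) {G. gap_greater (1 - \<delta>) G}
    \<ge> 1 - real n powr (- C)"
proof -
  define a where "a = real n powr (- real d * \<alpha>)"
  define p where "p = a * (1 - q) ^ d"
  define N where "N = n - 2 * d"
  define k where "k = nat \<lceil>t\<rceil>"
  have "t > 0" "ln n = (2 / \<beta>) * ln t" using n \<beta> by (simp_all add: t_def \<beta>_def ln_powr)
  have "t\<^sup>2 = real n powr (1 + (- real d * \<alpha>))"
    using n by (simp add: t_def power2_eq_square powr_add[symmetric])
  also have "\<dots> = real n * a" using n by (subst powr_add) (simp add: a_def)
  finally have "a * n = t\<^sup>2" by simp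
  have q: "0 \<le> q" "q \<le> 1" using n \<alpha> by (auto simp: q_def powr_minus intro!: inverse_le_1_iff[THEN iffD2]
      ge_one_powr_ge_zero)
  have a: "0 \<le> a" "a \<le> 1 / 2" using small(1) by (simp_all add: a_def)
  have "(1 - q) ^ d \<le> 1" using q by (simp add: power_le_one)
  then have "p \<le> a * 1" unfolding p_def using a by (intro mult_left_mono) auto
  moreover have "a * (1/2) \<le> p" unfolding p_def using a small(2) by (intro mult_left_mono) auto
  ultimately have p: "a / 2 \<le> p" "p \<le> a" by simp_all
  have "t \<le> real n powr (1/2)" unfolding t_def by (rule powr_mono) (use n \<alpha> in auto)
  then have "t + 1 \<le> real n - 2 * d" "real N = real n - 2 * d"
    using large \<open>t > 0\<close> by (auto simp: N_def of_nat_diff)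
  moreover have "t \<le> k" "k \<le> t + 1" using \<open>t > 0\<close> unfolding k_def by linarith+
  ultimately have k: "1 \<le> k" "k \<le> N" using \<open>t > 0\<close> by linarith+
  have "measure_pmf.prob (random_H N p p 0 0 (1 - q)) {G. \<not> gap_greater (1 - \<delta>) G}
      \<le> 2 * (real N ^ k * (1 - p) ^ (N - k)) + real N * (1/2) ^ k"
    using a p q \<eta> small(3) k weights \<delta> by (intro not_gap_greater_prob_le) auto
  also have "\<dots> \<le> real n powr (- C)"
    using n \<open>t > 0\<close> \<open>ln n = _\<close> a \<open>a * n = t\<^sup>2\<close> p \<open>t \<le> k\<close> \<open>k \<le> t + 1\<close> \<open>real N = _\<close>
      \<open>t + 1 \<le> _\<close> exponents
    by (intro failure_bound_le_powr) auto
  finally have "measure_pmf.prob (random_H N p p 0 0 (1 - q)) {G. \<not> gap_greater (1 - \<delta>) G}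
      \<le> real n powr (- C)" .
  then show ?thesis
    using measure_pmf.prob_neg[of "random_H N p p 0 0 (1 - q)" "gap_greater (1 - \<delta>)"]
    by (simp add: N_def p_def a_def)
qed

lemma parameters_eventually:
  fixes d :: nat and \<alpha> \<eta> C :: real and t :: "nat \<Rightarrow> real"
  defines "t \<equiv> \<lambda>n. real n powr ((1 - d * \<alpha>) / 2)"
  assumes d: "d \<ge> 1" and \<alpha>: "\<alpha> > 0" and \<beta>: "1 - d * \<alpha> > 0" and \<eta>: "\<eta> > 0"
  shows "eventually (\<lambda>n::nat. n \<ge> 1 \<and> real n powr (- real d * \<alpha>) < 1/2
    \<and> (1 - real n powr (- \<alpha>)) ^ d > 1/2 \<and> (real n powr (- \<alpha>)) powr \<eta> < 1/4
    \<and> real n powr (1/2) + 1 \<le> real n - 2 * d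
    \<and> (t n + 1) * (2 / (1 - d * \<alpha>)) * ln (t n) - (t n)\<^sup>2 / 2 + (2 * d + t n + 1) / 2
        + C * (2 / (1 - d * \<alpha>)) * ln (t n) + ln 4 \<le> 0
    \<and> (2 / (1 - d * \<alpha>)) * ln (t n) - t n * ln 2 + C * (2 / (1 - d * \<alpha>)) * ln (t n) + ln 2 \<le> 0)
    at_top"
proof -
  have decay: "((\<lambda>n::nat. real n powr (- c)) \<longlongrightarrow> 0) at_top" if "c > 0" for c
    using that by (intro tendsto_neg_powr filterlim_real_sequentially) auto
  have "((\<lambda>n::nat. (1 - real n powr (- \<alpha>)) ^ d) \<longlongrightarrow> (1 - 0) ^ d) at_top"
    using decay[OF \<alpha>] by (intro tendsto_intros)
  then have "eventually (\<lambda>n::nat. (1 - real n powr (- \<alpha>)) ^ d > 1/2) at_top"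
    by (rule order_tendstoD) simp
  moreover have "eventually (\<lambda>n::nat. real n powr (- real d * \<alpha>) < 1/2) at_top"
    using order_tendstoD(2)[OF decay[of "real d * \<alpha>"], of "1/2"] d \<alpha> by simp
  moreover have "eventually (\<lambda>n::nat. (real n powr (- \<alpha>)) powr \<eta> < 1/4) at_top"
    using order_tendstoD(2)[OF decay[of "\<alpha> * \<eta>"], of "1/4"] \<alpha> \<eta> by (simp add: powr_powr)
  moreover have "eventually (\<lambda>n::nat. real n powr (1/2) + 1 \<le> real n - 2 * d) at_top"
    by (rule eventually_compose_filterlim[OF _ filterlim_real_sequentially]) real_asymp
  moreover have "filterlim t at_top at_top"
    unfolding t_def using \<beta>
    by (intro filterlim_compose[OF real_powr_at_top filterlim_real_sequentially]) simp
  note eventually_compose_filterlim[OF exponents_eventually_nonpos this]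
  ultimately show ?thesis using eventually_ge_at_top[of 1] by eventually_elim auto
qed

lemma tolerance_for_gap:
  fixes \<delta> :: real
  assumes "\<delta> > 0"
  defines "\<eta> \<equiv> \<delta>\<^sup>2 / (4 + \<delta>\<^sup>2)"
  shows "0 < \<eta>" "\<eta> < 1" "2 / (1 - \<eta>) < 2 + \<delta>\<^sup>2"
proof -
  have pos: "\<delta>\<^sup>2 > 0" "4 + \<delta>\<^sup>2 > 0" using assms by (simp_all add: add_pos_nonneg)
  then show "0 < \<eta>" "\<eta> < 1" by (simp_all add: \<eta>_def)
  have "1 - \<eta> = 4 / (4 + \<delta>\<^sup>2)" using pos by (simp add: \<eta>_def field_simps)
  then have "2 / (1 - \<eta>) = 2 / (4 / (4 + \<delta>\<^sup>2))" by (simp only:)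
  also have "\<dots> = 2 + \<delta>\<^sup>2 / 2" using pos by (simp add: field_simps)
  finally show "2 / (1 - \<eta>) < 2 + \<delta>\<^sup>2" using pos by simp
qed

theorem lemma6p8:
  fixes d :: nat and \<alpha> \<delta> :: real
  assumes "d \<ge> 1" and "\<alpha> > 0" and "\<alpha> < 1 / real d" and "\<delta> > 0"
  shows "\<forall>C > 0. eventually (\<lambda>n::nat.
           measure_pmf.prob
             (random_H (n - 2 * d)
                (real n powr (- real d * \<alpha>) * (1 - real n powr (- \<alpha>)) ^ d)
                (real n powr (- real d * \<alpha>) * (1 - real n powr (- \<alpha>)) ^ d)
                0 0 (1 - real n powr (- \<alpha>)))
             {G. gap_greater (1 - \<delta>) G}
           \<ge> 1 - real n powr (- C)) at_top"
proof (intro allI impI)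
  fix C :: real
  obtain \<eta> where \<eta>: "0 < \<eta>" "\<eta> < 1" "2 / (1 - \<eta>) < 2 + \<delta>\<^sup>2"
    using tolerance_for_gap[OF \<open>\<delta> > 0\<close>] by blast
  have "1 - d * \<alpha> > 0" using assms by (simp add: field_simps)
  from parameters_eventually[OF assms(1,2) this \<eta>(1), of C]
  show "eventually (\<lambda>n::nat. measure_pmf.prob (random_H (n - 2 * d)
      (real n powr (- real d * \<alpha>) * (1 - real n powr (- \<alpha>)) ^ d)
      (real n powr (- real d * \<alpha>) * (1 - real n powr (- \<alpha>)) ^ d) 0 0 (1 - real n powr (- \<alpha>)))
      {G. gap_greater (1 - \<delta>) G} \<ge> 1 - real n powr (- C)) at_top"
    by (rule eventually_mono)
      (use gap_greater_prob_ge[of \<alpha> d \<eta> \<delta> _ C] \<open>1 - d * \<alpha> > 0\<close> \<open>\<alpha> > 0\<close> \<eta> \<open>\<delta> > 0\<close> in auto)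
qed

end
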